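(* Let $\mathcal{H}_S\cong\mathbb{C}^d$ (system) and $\mathcal{H}_E$ (environment) be finite-dimensional Hilbert spaces, let $\eta$ be a density operator on $\mathcal{H}_E$, and let $U_1,U_2$ be unitaries on $\mathcal{H}_S\otimes\mathcal{H}_E$ describing the joint evolution from time $r$ to time $s$ and from time $s$ to time $t$ ($r<s<t$), respectively. Define the linear maps on $\mathcal{B}(\mathcal{H}_S)$ $$\Lambda_{s:r}(X)=\operatorname{tr}_E[U_1(X\otimes\eta)U_1^\dagger],\qquad \Lambda_{t:r}(X)=\operatorname{tr}_E[U_2U_1(X\otimes\eta)U_1^\dagger U_2^\dagger],$$ and, for each density operator $\rho$ on $\mathcal{H}_S$, $\eta_s(\rho):=\operatorname{tr}_S[U_1(\rho\otimes\eta)U_1^\dagger]$ and $\Lambda^{(\rho)}_{t:s}(\sigma):=\operatorname{tr}_E[U_2(\sigma\otimes\eta_s(\rho))U_2^\dagger]$. Suppose the process is oCP-divisible, i.e. $\Lambda^{(\rho)}_{t:s}$ is the same map $\Lambda_{t:s}$ for every density operator $\rho$, and $\Lambda_{t:r}=\Lambda_{t:s}\circ\Lambda_{s:r}$. If in addition $\Lambda_{s:r}$ is invertible as a linear map on $\mathcal{B}(\mathcal{H}_S)$, then the map $\Phi_{t:s}:=\Lambda_{t:r}\circ\Lambda_{s:r}^{-1}$ is completely positive, i.e. the process is also iCP-divisible.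
   Context: $\operatorname{tr}_E$ and $\operatorname{tr}_S$ denote partial traces over environment and system. The map $\Lambda^{(\rho)}_{t:s}$ describes the system dynamics from $s$ to $t$ when the system was prepared in $\rho$ at time $r$, discarded just before $s$ and replaced by a fresh state $\sigma$ at $s$. "iCP-divisible" (CP divisible by inversion) means: $\Lambda_{s:r}$ is invertible and $\Lambda_{t:r}\circ\Lambda_{s:r}^{-1}$ is completely positive. *)

theory Defs
  imports "Jordan_Normal_Form.Matrix" Complex_Main
begin

(* Operators on C^m are complex m x m matrices (JNF type 'complex mat').
   H_S = C^d, H_E = C^n, H_S (x) H_E = C^(d*n) with basis index a*n + b
   (a < d system index, b < n environment index). *)

definition adj :: "complex mat \<Rightarrow> complex mat" where
  "adj A = mat (dim_col A) (dim_row A) (\<lambda>(i,j). cnj (A $$ (j,i)))"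

definition kron :: "complex mat \<Rightarrow> complex mat \<Rightarrow> complex mat" where
  "kron A B = mat (dim_row A * dim_row B) (dim_col A * dim_col B)
     (\<lambda>(i,j). A $$ (i div dim_row B, j div dim_col B) * B $$ (i mod dim_row B, j mod dim_col B))"

definition mtrace :: "complex mat \<Rightarrow> complex" where
  "mtrace A = (\<Sum>i<dim_row A. A $$ (i,i))"

definition ptrace_E :: "nat \<Rightarrow> nat \<Rightarrow> complex mat \<Rightarrow> complex mat" where
  "ptrace_E d n M = mat d d (\<lambda>(a,a'). \<Sum>b<n. M $$ (a*n+b, a'*n+b))"

definition ptrace_S :: "nat \<Rightarrow> nat \<Rightarrow> complex mat \<Rightarrow> complex mat" where
  "ptrace_S d n M = mat n n (\<lambda>(b,b'). \<Sum>a<d. M $$ (a*n+b, a*n+b'))"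

definition hermitian :: "complex mat \<Rightarrow> bool" where
  "hermitian A \<longleftrightarrow> adj A = A"

definition psd :: "nat \<Rightarrow> complex mat \<Rightarrow> bool" where
  "psd m A \<longleftrightarrow> A \<in> carrier_mat m m \<and> hermitian A \<and>
     (\<forall>v \<in> carrier_vec m. Im (conjugate v \<bullet> (A *\<^sub>v v)) = 0 \<and> Re (conjugate v \<bullet> (A *\<^sub>v v)) \<ge> 0)"

definition density :: "nat \<Rightarrow> complex mat \<Rightarrow> bool" where
  "density m \<rho> \<longleftrightarrow> psd m \<rho> \<and> mtrace \<rho> = 1"

definition unitary_mat :: "nat \<Rightarrow> complex mat \<Rightarrow> bool" where
  "unitary_mat m U \<longleftrightarrow> U \<in> carrier_mat m m \<and> adj U * U = 1\<^sub>m m \<and> U * adj U = 1\<^sub>m m"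

definition linear_on :: "nat \<Rightarrow> (complex mat \<Rightarrow> complex mat) \<Rightarrow> bool" where
  "linear_on d \<Phi> \<longleftrightarrow>
     (\<forall>X \<in> carrier_mat d d. \<Phi> X \<in> carrier_mat d d) \<and>
     (\<forall>X \<in> carrier_mat d d. \<forall>Y \<in> carrier_mat d d. \<Phi> (X + Y) = \<Phi> X + \<Phi> Y) \<and>
     (\<forall>X \<in> carrier_mat d d. \<forall>c. \<Phi> (c \<cdot>\<^sub>m X) = c \<cdot>\<^sub>m \<Phi> X)"

(* (id_k (x) Phi) applied to an operator on C^k (x) C^d, index p*d + a *)
definition ampliate :: "nat \<Rightarrow> nat \<Rightarrow> (complex mat \<Rightarrow> complex mat) \<Rightarrow> complex mat \<Rightarrow> complex mat" where
  "ampliate k d \<Phi> M = mat (k*d) (k*d) (\<lambda>(i,j).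
     \<Phi> (mat d d (\<lambda>(a,a'). M $$ ((i div d)*d + a, (j div d)*d + a'))) $$ (i mod d, j mod d))"

definition completely_positive :: "nat \<Rightarrow> (complex mat \<Rightarrow> complex mat) \<Rightarrow> bool" where
  "completely_positive d \<Phi> \<longleftrightarrow> linear_on d \<Phi> \<and>
     (\<forall>k. \<forall>M. psd (k*d) M \<longrightarrow> psd (k*d) (ampliate k d \<Phi> M))"

definition Lam_sr :: "nat \<Rightarrow> nat \<Rightarrow> complex mat \<Rightarrow> complex mat \<Rightarrow> complex mat \<Rightarrow> complex mat" where
  "Lam_sr d n \<eta> U1 X = ptrace_E d n (U1 * kron X \<eta> * adj U1)"

definition Lam_tr :: "nat \<Rightarrow> nat \<Rightarrow> complex mat \<Rightarrow> complex mat \<Rightarrow> complex mat \<Rightarrow> complex mat \<Rightarrow> complex mat" where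
  "Lam_tr d n \<eta> U1 U2 X = ptrace_E d n (U2 * U1 * kron X \<eta> * adj U1 * adj U2)"

definition eta_s :: "nat \<Rightarrow> nat \<Rightarrow> complex mat \<Rightarrow> complex mat \<Rightarrow> complex mat \<Rightarrow> complex mat" where
  "eta_s d n \<eta> U1 \<rho> = ptrace_S d n (U1 * kron \<rho> \<eta> * adj U1)"

definition Lam_ts_rho :: "nat \<Rightarrow> nat \<Rightarrow> complex mat \<Rightarrow> complex mat \<Rightarrow> complex mat \<Rightarrow> complex mat \<Rightarrow> complex mat \<Rightarrow> complex mat" where
  "Lam_ts_rho d n \<eta> U1 U2 \<rho> \<sigma> = ptrace_E d n (U2 * kron \<sigma> (eta_s d n \<eta> U1 \<rho>) * adj U2)"

end

theory Submission
  imports Defs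
begin

(* Under oCP-divisibility, Phi_{t:s}(X) = Lambda_{t:r}(Lambda_{s:r}^{-1} X) = Lambda_{t:s}(X)
   = Lambda^(rho)_{t:s}(X) for any state rho. Hence Phi_{t:s} = tr_E[U2 (_ (x) eta_s(rho)) U2^dagger]
   is a Stinespring dilation with the positive environment state eta_s(rho), and such maps are
   completely positive.
   Positivity is tracked through Gram representations A_ij = sum_k F_k(i) * conj(H_k(j)): every
   psd matrix has one with F = H (by Cholesky elimination), every matrix with such a
   representation is psd, and tensor products, unitary conjugation and partial traces act on
   the factors explicitly. The blocks M_pq of a psd M on C^k (x) C^d have the factors of the
   rows p and q of M, so the blocks of (id_k (x) Phi)(M) again have common factors. *)

definition quad_form :: "nat set \<Rightarrow> (nat \<Rightarrow> nat \<Rightarrow> complex) \<Rightarrow> (nat \<Rightarrow> complex) \<Rightarrow> complex" where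
  "quad_form S A v = (\<Sum>i\<in>S. \<Sum>j\<in>S. cnj (v i) * A i j * v j)"

definition pos_kernel :: "nat set \<Rightarrow> (nat \<Rightarrow> nat \<Rightarrow> complex) \<Rightarrow> bool" where
  "pos_kernel S A \<longleftrightarrow> (\<forall>i\<in>S. \<forall>j\<in>S. A j i = cnj (A i j)) \<and> (\<forall>v. quad_form S A v \<ge> 0)"

lemma quad_form_eq_on_support:
  assumes "finite S" "T \<subseteq> S" "\<And>i. i \<in> S - T \<Longrightarrow> v i = 0"
  shows "quad_form S A v = quad_form T A v"
proof -
  have "quad_form S A v = (\<Sum>i\<in>T. \<Sum>j\<in>S. cnj (v i) * A i j * v j)"
    unfolding quad_form_def using assms by (intro sum.mono_neutral_right) auto
  also have "\<dots> = quad_form T A v"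
    unfolding quad_form_def using assms by (intro sum.cong refl sum.mono_neutral_right) auto
  finally show ?thesis .
qed

lemma quad_form_insert:
  assumes "finite S" "r \<notin> S"
  shows "quad_form (insert r S) A v = cnj (v r) * A r r * v r + cnj (v r) * (\<Sum>j\<in>S. A r j * v j)
    + (\<Sum>i\<in>S. cnj (v i) * A i r) * v r + quad_form S A v"
  using assms by (simp add: quad_form_def sum.distrib sum_distrib_left sum_distrib_right mult.assoc)

lemma pos_kernel_diag_nonneg:
  assumes "pos_kernel S A" "finite S" "r \<in> S"
  shows "A r r \<ge> 0"
proof -
  let ?e = "\<lambda>i. if i = r then (1::complex) else 0"
  have "quad_form S A ?e = quad_form {r} A ?e"
    using assms by (intro quad_form_eq_on_support) auto
  also have "\<dots> = A r r" by (simp add: quad_form_def)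
  finally show ?thesis using assms(1) unfolding pos_kernel_def by metis
qed

lemma pos_kernel_zero_diag_row:
  assumes pos: "pos_kernel S A" and S: "finite S" "r \<in> S" "j \<in> S" and Arr: "A r r = 0"
  shows "A r j = 0"
proof (rule ccontr)
  define a where "a = A r j"
  assume "A r j \<noteq> 0"
  then have "j \<noteq> r" and a: "cmod a > 0" using Arr by (auto simp: a_def)
  have Ajr: "A j r = cnj a" using pos S unfolding pos_kernel_def a_def by blast
  have Ajj: "Re (A j j) \<ge> 0" "Im (A j j) = 0"
    using pos_kernel_diag_nonneg[OF pos S(1,3)] by (auto simp: less_eq_complex_def)
  define s where "s = (Re (A j j) + 1) / (cmod a)\<^sup>2"
  define t where "t = - complex_of_real s * a"
  let ?v = "\<lambda>i. if i = r then t else if i = j then (1::complex) else 0"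
  have "quad_form S A ?v = quad_form {r, j} A ?v"
    using S by (intro quad_form_eq_on_support) auto
  also have "\<dots> = cnj t * a + cnj a * t + A j j"
    using \<open>j \<noteq> r\<close> Arr Ajr by (simp add: quad_form_def a_def)
  also have "\<dots> = A j j - 2 * complex_of_real (s * (cmod a)\<^sup>2)"
    unfolding t_def by (simp add: algebra_simps flip: complex_norm_square)
  also have "\<dots> = A j j - 2 * complex_of_real (Re (A j j) + 1)"
    unfolding s_def using a by simp
  finally have "Re (quad_form S A ?v) < 0" using Ajj by simp
  then show False using pos unfolding pos_kernel_def less_eq_complex_def by (metis not_le zero_complex.sel(1))
qed

lemma pos_kernel_subset:
  assumes pos: "pos_kernel T A" and "finite T" "S \<subseteq> T"
  shows "pos_kernel S A"
proof -
  have "quad_form S A v = quad_form T A (\<lambda>i. if i \<in> S then v i else 0)" for v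
  proof -
    have "quad_form T A (\<lambda>i. if i \<in> S then v i else 0) = quad_form S A (\<lambda>i. if i \<in> S then v i else 0)"
      using assms by (intro quad_form_eq_on_support) auto
    also have "\<dots> = quad_form S A v"
      unfolding quad_form_def by (intro sum.cong refl) auto
    finally show ?thesis by simp
  qed
  then show ?thesis using pos \<open>S \<subseteq> T\<close> unfolding pos_kernel_def by (metis subsetD)
qed

lemma quad_form_schur_complement:
  assumes herm: "\<And>i. i \<in> S \<Longrightarrow> A i r = cnj (A r i)" and S: "finite S" "r \<notin> S"
    and q: "q * q = A r r" "cnj q = q" "q \<noteq> 0"
  defines "u \<equiv> \<lambda>i. A i r / q"
  shows "quad_form S (\<lambda>i j. A i j - u i * cnj (u j)) v
       = quad_form (insert r S) A (v(r := - (\<Sum>j\<in>S. A r j * v j) / A r r))"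
proof -
  define \<beta> where "\<beta> = (\<Sum>j\<in>S. A r j * v j)"
  define w where "w = v(r := - \<beta> / A r r)"
  have Arr: "A r r \<noteq> 0" "cnj (A r r) = A r r" using q by (auto simp flip: q(1))
  have col: "(\<Sum>i\<in>S. cnj (v i) * A i r) = cnj \<beta>"
    unfolding \<beta>_def cnj_sum by (intro sum.cong) (auto simp: herm mult.commute)
  have w_S: "\<And>i. i \<in> S \<Longrightarrow> w i = v i" using S unfolding w_def by auto
  have "quad_form (insert r S) A w
      = cnj (w r) * A r r * w r + cnj (w r) * \<beta> + cnj \<beta> * w r + quad_form S A v"
    using quad_form_insert[OF S, of A w] w_S col
    by (simp add: \<beta>_def quad_form_def cong: sum.cong)
  also have "\<dots> = quad_form S A v - cnj \<beta> * \<beta> / A r r"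
    using Arr by (simp add: w_def field_simps)
  also have "cnj \<beta> * \<beta> / A r r = (\<Sum>i\<in>S. cnj (v i) * u i) * (\<Sum>j\<in>S. cnj (u j) * v j)"
  proof -
    have "(\<Sum>i\<in>S. cnj (v i) * u i) = cnj \<beta> / q"
      unfolding u_def col[symmetric] by (simp add: sum_divide_distrib)
    moreover have "(\<Sum>j\<in>S. cnj (u j) * v j) = \<beta> / q"
      unfolding \<beta>_def u_def sum_divide_distrib by (intro sum.cong) (auto simp: herm q(2))
    ultimately show ?thesis by (simp flip: q(1))
  qed
  also have "quad_form S A v - \<dots> = quad_form S (\<lambda>i j. A i j - u i * cnj (u j)) v"
    by (simp add: quad_form_def sum_product sum_subtractf algebra_simps)
  finally show ?thesis unfolding w_def \<beta>_def by (rule sym)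
qed

lemma pos_kernel_pivot:
  assumes pos: "pos_kernel (insert r S) A" and S: "finite S" "r \<notin> S"
  obtains u where "\<And>i j. i \<in> insert r S \<Longrightarrow> j \<in> insert r S \<Longrightarrow> i = r \<or> j = r \<Longrightarrow> A i j = u i * cnj (u j)"
    and "pos_kernel S (\<lambda>i j. A i j - u i * cnj (u j))"
proof -
  have herm: "\<And>i j. i \<in> insert r S \<Longrightarrow> j \<in> insert r S \<Longrightarrow> A j i = cnj (A i j)"
    using pos unfolding pos_kernel_def by blast
  have Arr: "Re (A r r) \<ge> 0" "Im (A r r) = 0"
    using pos_kernel_diag_nonneg[OF pos] S by (auto simp: less_eq_complex_def)
  show ?thesis
  proof (cases "A r r = 0")
    case True
    have row: "A r j = 0" if "j \<in> insert r S" for j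
      using pos_kernel_zero_diag_row[OF pos _ _ that True] S by simp
    have "A i j = 0" if "i \<in> insert r S" "j \<in> insert r S" "i = r \<or> j = r" for i j
      using row herm that by (metis complex_cnj_zero insertI1)
    moreover have "pos_kernel S A" using pos_kernel_subset[OF pos] S by blast
    ultimately show ?thesis by (intro that[of "\<lambda>_. 0"]) auto
  next
    case False
    define q where "q = complex_of_real (sqrt (Re (A r r)))"
    have q: "q * q = A r r" "cnj q = q" "q \<noteq> 0"
      using Arr False by (auto simp: q_def complex_eq_iff simp flip: of_real_mult)
    define u where "u = (\<lambda>i. A i r / q)"
    show ?thesis
    proof (rule that[of u])
      fix i j assume ij: "i \<in> insert r S" "j \<in> insert r S" "i = r \<or> j = r"
      have "A r j = cnj (A j r)" using herm[of j r] ij by simp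
      then show "A i j = u i * cnj (u j)"
        using ij q unfolding u_def by (auto simp: field_simps simp flip: q(1))
    next
      have col: "\<And>i. i \<in> S \<Longrightarrow> A i r = cnj (A r i)" using herm by blast
      have "quad_form S (\<lambda>i j. A i j - u i * cnj (u j)) v \<ge> 0" for v
      proof -
        have "quad_form S (\<lambda>i j. A i j - u i * cnj (u j)) v
            = quad_form (insert r S) A (v(r := - (\<Sum>j\<in>S. A r j * v j) / A r r))"
          unfolding u_def by (rule quad_form_schur_complement[where A = A, OF col S q])
        moreover have "quad_form (insert r S) A w \<ge> 0" for w
          using pos unfolding pos_kernel_def by blast
        ultimately show ?thesis by simp
      qed
      moreover have "A j i - u j * cnj (u i) = cnj (A i j - u i * cnj (u j))" if "i \<in> S" "j \<in> S" for i j
        using herm[of i j] that by simp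
      ultimately show "pos_kernel S (\<lambda>i j. A i j - u i * cnj (u j))"
        unfolding pos_kernel_def by blast
    qed
  qed
qed

lemma pos_kernel_gram:
  assumes "finite S" "pos_kernel S A"
  shows "\<exists>(K::nat) f. \<forall>i\<in>S. \<forall>j\<in>S. A i j = (\<Sum>\<kappa><K. f \<kappa> i * cnj (f \<kappa> j))"
  using assms
proof (induction S arbitrary: A rule: finite_induct)
  case empty
  then show ?case by simp
next
  case (insert r S)
  obtain u where u: "\<And>i j. i \<in> insert r S \<Longrightarrow> j \<in> insert r S \<Longrightarrow> i = r \<or> j = r \<Longrightarrow> A i j = u i * cnj (u j)"
    and pos: "pos_kernel S (\<lambda>i j. A i j - u i * cnj (u j))"
    using pos_kernel_pivot[OF insert.prems insert.hyps] by blast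
  obtain K :: nat and f where f: "\<forall>i\<in>S. \<forall>j\<in>S. A i j - u i * cnj (u j) = (\<Sum>\<kappa><K. f \<kappa> i * cnj (f \<kappa> j))"
    using insert.IH[OF pos] by blast
  define g where "g = (\<lambda>\<kappa> i. if \<kappa> = K then u i else if i = r then 0 else f \<kappa> i)"
  have "A i j = (\<Sum>\<kappa><Suc K. g \<kappa> i * cnj (g \<kappa> j))" if "i \<in> insert r S" "j \<in> insert r S" for i j
    using that u[OF that] f by (cases "i = r \<or> j = r") (auto simp: g_def diff_eq_eq)
  then show ?case by blast
qed

lemma sum_sum_sum_cnj_mult:
  "(\<Sum>i\<in>I. \<Sum>j\<in>J. \<Sum>\<kappa>\<in>S. f \<kappa> i * cnj (g \<kappa> j)) = (\<Sum>\<kappa>\<in>S. (\<Sum>i\<in>I. f \<kappa> i) * cnj (\<Sum>j\<in>J. g \<kappa> j))"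
proof -
  have "(\<Sum>i\<in>I. \<Sum>j\<in>J. \<Sum>\<kappa>\<in>S. f \<kappa> i * cnj (g \<kappa> j)) = (\<Sum>i\<in>I. \<Sum>\<kappa>\<in>S. \<Sum>j\<in>J. f \<kappa> i * cnj (g \<kappa> j))"
    by (intro sum.cong refl sum.swap)
  also have "\<dots> = (\<Sum>\<kappa>\<in>S. \<Sum>i\<in>I. \<Sum>j\<in>J. f \<kappa> i * cnj (g \<kappa> j))"
    by (rule sum.swap)
  finally show ?thesis by (simp add: sum_product cnj_sum)
qed

definition gram_rep :: "nat \<Rightarrow> complex mat \<Rightarrow> ('k \<Rightarrow> nat \<Rightarrow> complex) \<Rightarrow> ('k \<Rightarrow> nat \<Rightarrow> complex) \<Rightarrow> 'k set \<Rightarrow> bool" where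
  "gram_rep N A F H S \<longleftrightarrow> finite S \<and> (\<forall>i<N. \<forall>j<N. A $$ (i,j) = (\<Sum>\<kappa>\<in>S. F \<kappa> i * cnj (H \<kappa> j)))"

lemma psd_gram_rep:
  assumes "psd N A"
  obtains K :: nat and F where "gram_rep N A F F {..<K}"
proof -
  have A: "A \<in> carrier_mat N N" and "adj A = A" using assms unfolding psd_def hermitian_def by auto
  have "pos_kernel {..<N} (\<lambda>i j. A $$ (i,j))"
    unfolding pos_kernel_def
  proof (intro conjI ballI allI)
    fix i j assume "i \<in> {..<N}" "j \<in> {..<N}"
    then have "adj A $$ (j,i) = cnj (A $$ (i,j))" using A unfolding adj_def by auto
    then show "A $$ (j,i) = cnj (A $$ (i,j))" using \<open>adj A = A\<close> by simp
  next
    fix v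
    have "conjugate (vec N v) \<bullet> (A *\<^sub>v vec N v) = quad_form {..<N} (\<lambda>i j. A $$ (i,j)) v"
      using A by (simp add: quad_form_def scalar_prod_def atLeast0LessThan sum_distrib_left mult.assoc)
    then show "quad_form {..<N} (\<lambda>i j. A $$ (i,j)) v \<ge> 0"
      using assms unfolding psd_def less_eq_complex_def by (metis vec_carrier zero_complex.sel)
  qed
  then obtain K :: nat and F where "\<forall>i\<in>{..<N}. \<forall>j\<in>{..<N}. A $$ (i,j) = (\<Sum>\<kappa><K. F \<kappa> i * cnj (F \<kappa> j))"
    using pos_kernel_gram by blast
  then show ?thesis using that unfolding gram_rep_def by auto
qed

lemma gram_rep_psd:
  assumes A: "A \<in> carrier_mat N N" and gram: "gram_rep N A F F S"
  shows "psd N A"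
proof -
  have entry: "\<And>i j. i < N \<Longrightarrow> j < N \<Longrightarrow> A $$ (i,j) = (\<Sum>\<kappa>\<in>S. F \<kappa> i * cnj (F \<kappa> j))"
    using gram unfolding gram_rep_def by simp
  have "adj A = A"
    using A by (intro eq_matI) (auto simp: adj_def entry mult.commute)
  moreover have "conjugate v \<bullet> (A *\<^sub>v v) \<ge> 0" if "v \<in> carrier_vec N" for v
  proof -
    have "conjugate v \<bullet> (A *\<^sub>v v) = (\<Sum>i<N. \<Sum>j<N. \<Sum>\<kappa>\<in>S. (cnj (v $ i) * F \<kappa> i) * cnj (cnj (v $ j) * F \<kappa> j))"
      using A that by (simp add: scalar_prod_def atLeast0LessThan entry sum_distrib_left mult_ac)
    also have "\<dots> = (\<Sum>\<kappa>\<in>S. (\<Sum>i<N. cnj (v $ i) * F \<kappa> i) * cnj (\<Sum>i<N. cnj (v $ i) * F \<kappa> i))"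
      by (rule sum_sum_sum_cnj_mult)
    also have "\<dots> \<ge> 0"
      by (intro sum_nonneg) (metis conjugate_complex_def conjugate_square_positive)
    finally show ?thesis .
  qed
  ultimately show ?thesis
    using A unfolding psd_def hermitian_def less_eq_complex_def by auto
qed

lemma adj_carrier_mat[simp]: "U \<in> carrier_mat m n \<Longrightarrow> adj U \<in> carrier_mat n m"
  unfolding adj_def by simp

lemma conj_adj_entry:
  assumes "U \<in> carrier_mat N N" "K \<in> carrier_mat N N" "i < N" "j < N"
  shows "(U * K * adj U) $$ (i,j) = (\<Sum>x<N. \<Sum>y<N. U $$ (i,x) * K $$ (x,y) * cnj (U $$ (j,y)))"
proof -
  have "(U * K * adj U) $$ (i,j) = (\<Sum>y<N. \<Sum>x<N. U $$ (i,x) * K $$ (x,y) * cnj (U $$ (j,y)))"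
    using assms by (simp add: scalar_prod_def adj_def atLeast0LessThan sum_distrib_right)
  also have "\<dots> = (\<Sum>x<N. \<Sum>y<N. U $$ (i,x) * K $$ (x,y) * cnj (U $$ (j,y)))"
    by (rule sum.swap)
  finally show ?thesis .
qed

lemma gram_rep_conj:
  assumes U: "U \<in> carrier_mat N N" and K: "K \<in> carrier_mat N N" and gram: "gram_rep N K F H S"
  shows "gram_rep N (U * K * adj U) (\<lambda>\<kappa> i. \<Sum>x<N. U $$ (i,x) * F \<kappa> x) (\<lambda>\<kappa> i. \<Sum>y<N. U $$ (i,y) * H \<kappa> y) S"
proof -
  have "(U * K * adj U) $$ (i,j) = (\<Sum>\<kappa>\<in>S. (\<Sum>x<N. U $$ (i,x) * F \<kappa> x) * cnj (\<Sum>y<N. U $$ (j,y) * H \<kappa> y))"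
    if "i < N" "j < N" for i j
  proof -
    have "(U * K * adj U) $$ (i,j) = (\<Sum>x<N. \<Sum>y<N. \<Sum>\<kappa>\<in>S. U $$ (i,x) * F \<kappa> x * cnj (U $$ (j,y) * H \<kappa> y))"
      using gram that unfolding conj_adj_entry[OF U K that] gram_rep_def
      by (simp add: sum_distrib_left sum_distrib_right mult_ac)
    then show ?thesis by (simp only: sum_sum_sum_cnj_mult)
  qed
  then show ?thesis using gram unfolding gram_rep_def by simp
qed

lemma index_pair_less:
  assumes "(a::nat) < d" "b < n"
  shows "a * n + b < d * n"
proof -
  have "a * n + b < Suc a * n" using assms by simp
  also have "\<dots> \<le> d * n" using assms by (intro mult_le_mono1) simp
  finally show ?thesis .
qed

lemma kron_carrier_mat[simp]:
  "A \<in> carrier_mat m m' \<Longrightarrow> B \<in> carrier_mat n n' \<Longrightarrow> kron A B \<in> carrier_mat (m*n) (m'*n')"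
  unfolding kron_def by simp

lemma gram_rep_kron:
  assumes A: "A \<in> carrier_mat d d" and B: "B \<in> carrier_mat n n"
    and gA: "gram_rep d A F1 H1 S" and gB: "gram_rep n B F2 H2 T"
  shows "gram_rep (d*n) (kron A B) (\<lambda>(\<kappa>,m) i. F1 \<kappa> (i div n) * F2 m (i mod n))
     (\<lambda>(\<kappa>,m) i. H1 \<kappa> (i div n) * H2 m (i mod n)) (S \<times> T)"
proof -
  have "kron A B $$ (i,j) = (\<Sum>(\<kappa>,m)\<in>S \<times> T. F1 \<kappa> (i div n) * F2 m (i mod n) * cnj (H1 \<kappa> (j div n) * H2 m (j mod n)))"
    if "i < d*n" "j < d*n" for i j
  proof -
    have "n > 0" using that by (cases n) auto
    then have "i div n < d" "j div n < d" "i mod n < n" "j mod n < n"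
      using that by (simp_all add: less_mult_imp_div_less)
    then have "kron A B $$ (i,j) = (\<Sum>\<kappa>\<in>S. F1 \<kappa> (i div n) * cnj (H1 \<kappa> (j div n))) * (\<Sum>m\<in>T. F2 m (i mod n) * cnj (H2 m (j mod n)))"
      using A B gA gB that unfolding kron_def gram_rep_def by simp
    then show ?thesis by (simp add: sum.cartesian_product sum_product mult_ac)
  qed
  then show ?thesis using gA gB unfolding gram_rep_def by (simp add: case_prod_beta)
qed

lemma gram_rep_ptrace_E:
  assumes gram: "gram_rep (d*n) M F H S"
  shows "gram_rep d (ptrace_E d n M) (\<lambda>(\<kappa>,b) a. F \<kappa> (a*n+b)) (\<lambda>(\<kappa>,b) a. H \<kappa> (a*n+b)) (S \<times> {..<n})"
proof -
  have "ptrace_E d n M $$ (a,a') = (\<Sum>(\<kappa>,b)\<in>S \<times> {..<n}. F \<kappa> (a*n+b) * cnj (H \<kappa> (a'*n+b)))"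
    if "a < d" "a' < d" for a a'
  proof -
    have "ptrace_E d n M $$ (a,a') = (\<Sum>b<n. \<Sum>\<kappa>\<in>S. F \<kappa> (a*n+b) * cnj (H \<kappa> (a'*n+b)))"
      using gram that index_pair_less unfolding ptrace_E_def gram_rep_def by simp
    then show ?thesis by (simp add: sum.cartesian_product[symmetric] sum.swap[of _ "{..<n}"])
  qed
  then show ?thesis using gram unfolding gram_rep_def by (simp add: case_prod_beta)
qed

lemma gram_rep_ptrace_S:
  assumes gram: "gram_rep (d*n) M F H S"
  shows "gram_rep n (ptrace_S d n M) (\<lambda>(\<kappa>,a) b. F \<kappa> (a*n+b)) (\<lambda>(\<kappa>,a) b. H \<kappa> (a*n+b)) (S \<times> {..<d})"
proof -
  have "ptrace_S d n M $$ (b,b') = (\<Sum>(\<kappa>,a)\<in>S \<times> {..<d}. F \<kappa> (a*n+b) * cnj (H \<kappa> (a*n+b')))"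
    if "b < n" "b' < n" for b b'
  proof -
    have "ptrace_S d n M $$ (b,b') = (\<Sum>a<d. \<Sum>\<kappa>\<in>S. F \<kappa> (a*n+b) * cnj (H \<kappa> (a*n+b')))"
      using gram that index_pair_less unfolding ptrace_S_def gram_rep_def by simp
    then show ?thesis by (simp add: sum.cartesian_product[symmetric] sum.swap[of _ "{..<d}"])
  qed
  then show ?thesis using gram unfolding gram_rep_def by (simp add: case_prod_beta)
qed

definition stinespring_map :: "nat \<Rightarrow> nat \<Rightarrow> complex mat \<Rightarrow> complex mat \<Rightarrow> complex mat \<Rightarrow> complex mat" where
  "stinespring_map d n U E X = ptrace_E d n (U * kron X E * adj U)"

definition stinespring_factor ::
    "nat \<Rightarrow> nat \<Rightarrow> complex mat \<Rightarrow> ('g \<Rightarrow> nat \<Rightarrow> complex) \<Rightarrow> ('k \<Rightarrow> nat \<Rightarrow> complex) \<Rightarrow> ('k \<times> 'g) \<times> nat \<Rightarrow> nat \<Rightarrow> complex" where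
  "stinespring_factor d n U G F =
     (\<lambda>(p, b) a. \<Sum>x<d*n. U $$ (a*n+b, x) * (F (fst p) (x div n) * G (snd p) (x mod n)))"

lemma gram_rep_stinespring:
  assumes U: "U \<in> carrier_mat (d*n) (d*n)" and Y: "Y \<in> carrier_mat d d" and E: "E \<in> carrier_mat n n"
    and gY: "gram_rep d Y F H S" and gE: "gram_rep n E G G T"
  shows "gram_rep d (stinespring_map d n U E Y)
    (stinespring_factor d n U G F) (stinespring_factor d n U G H) ((S \<times> T) \<times> {..<n})"
  using gram_rep_ptrace_E[OF gram_rep_conj[OF U _ gram_rep_kron[OF Y E gY gE]]] Y E
  unfolding stinespring_map_def stinespring_factor_def by (simp add: case_prod_beta)

lemma kron_add_left:
  assumes "A \<in> carrier_mat m m'" "B \<in> carrier_mat m m'"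
  shows "kron (A + B) C = kron A C + kron B C"
  using assms by (intro eq_matI) (auto simp: kron_def less_mult_imp_div_less distrib_right)

lemma kron_smult_left: "kron (c \<cdot>\<^sub>m A) B = c \<cdot>\<^sub>m kron A B"
  by (intro eq_matI) (auto simp: kron_def less_mult_imp_div_less)

lemma ptrace_E_add:
  assumes "M \<in> carrier_mat (d*n) (d*n)" "N \<in> carrier_mat (d*n) (d*n)"
  shows "ptrace_E d n (M + N) = ptrace_E d n M + ptrace_E d n N"
  using assms by (intro eq_matI) (auto simp: ptrace_E_def index_pair_less sum.distrib)

lemma ptrace_E_smult:
  assumes "M \<in> carrier_mat (d*n) (d*n)"
  shows "ptrace_E d n (c \<cdot>\<^sub>m M) = c \<cdot>\<^sub>m ptrace_E d n M"
  using assms by (intro eq_matI) (auto simp: ptrace_E_def index_pair_less sum_distrib_left)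

lemma linear_on_stinespring_map:
  assumes U: "U \<in> carrier_mat (d*n) (d*n)" and E: "E \<in> carrier_mat n n"
  shows "linear_on d (stinespring_map d n U E)"
  unfolding linear_on_def
proof (intro conjI ballI allI)
  fix X Y :: "complex mat" assume X: "X \<in> carrier_mat d d" and Y: "Y \<in> carrier_mat d d"
  have KX: "kron X E \<in> carrier_mat (d*n) (d*n)" and KY: "kron Y E \<in> carrier_mat (d*n) (d*n)"
    using X Y E by simp_all
  have "U * kron (X + Y) E * adj U = (U * kron X E + U * kron Y E) * adj U"
    using X Y by (simp add: kron_add_left mult_add_distrib_mat[OF U KX KY])
  also have "\<dots> = U * kron X E * adj U + U * kron Y E * adj U"
    using U KX KY by (intro add_mult_distrib_mat[where nc = "d*n"]) auto
  finally show "stinespring_map d n U E (X + Y) = stinespring_map d n U E X + stinespring_map d n U E Y"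
    using U KX KY unfolding stinespring_map_def by (metis ptrace_E_add mult_carrier_mat adj_carrier_mat)
next
  fix X :: "complex mat" and c assume X: "X \<in> carrier_mat d d"
  have KX: "kron X E \<in> carrier_mat (d*n) (d*n)" using X E by simp
  have "U * kron (c \<cdot>\<^sub>m X) E * adj U = c \<cdot>\<^sub>m (U * kron X E) * adj U"
    by (simp add: kron_smult_left mult_smult_distrib[OF U KX])
  also have "\<dots> = c \<cdot>\<^sub>m (U * kron X E * adj U)"
    using U KX by (intro mult_smult_assoc_mat[where nc = "d*n"]) auto
  finally show "stinespring_map d n U E (c \<cdot>\<^sub>m X) = c \<cdot>\<^sub>m stinespring_map d n U E X"
    using U KX unfolding stinespring_map_def by (metis ptrace_E_smult mult_carrier_mat adj_carrier_mat)
qed (simp add: stinespring_map_def ptrace_E_def)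

lemma completely_positive_stinespring_map:
  assumes U: "U \<in> carrier_mat (d*n) (d*n)" and E: "psd n E"
  shows "completely_positive d (stinespring_map d n U E)"
  unfolding completely_positive_def
proof (intro conjI allI impI)
  have Ecar: "E \<in> carrier_mat n n" using E unfolding psd_def by simp
  then show "linear_on d (stinespring_map d n U E)" by (rule linear_on_stinespring_map[OF U])
  fix k M assume "psd (k*d) M"
  then obtain K :: nat and F where gM: "gram_rep (k*d) M F F {..<K}" by (rule psd_gram_rep)
  obtain L :: nat and G where gE: "gram_rep n E G G {..<L}" using psd_gram_rep[OF E] by blast
  define block where "block p q = mat d d (\<lambda>(a,a'). M $$ (p*d+a, q*d+a'))" for p q
  define row_factor where "row_factor p \<kappa> a = F \<kappa> (p*d+a)" for p \<kappa> a
  have g_block: "gram_rep d (block p q) (row_factor p) (row_factor q) {..<K}" if "p < k" "q < k" for p q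
    using gM that index_pair_less unfolding gram_rep_def block_def row_factor_def by simp
  define Z where "Z s i = stinespring_factor d n U G (row_factor (i div d)) s (i mod d)" for s i
  have "ampliate k d (stinespring_map d n U E) M $$ (i,j) = (\<Sum>s\<in>({..<K} \<times> {..<L}) \<times> {..<n}. Z s i * cnj (Z s j))"
    if "i < k*d" "j < k*d" for i j
  proof -
    have "d > 0" using that by (cases d) auto
    then have ij: "i div d < k" "j div d < k" "i mod d < d" "j mod d < d"
      using that by (simp_all add: less_mult_imp_div_less)
    have "ampliate k d (stinespring_map d n U E) M $$ (i,j)
        = stinespring_map d n U E (block (i div d) (j div d)) $$ (i mod d, j mod d)"
      using that unfolding ampliate_def block_def by simp
    then show ?thesis
      using gram_rep_stinespring[OF U _ Ecar g_block[OF ij(1,2)] gE] ij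
      unfolding gram_rep_def Z_def block_def by simp
  qed
  then have "gram_rep (k*d) (ampliate k d (stinespring_map d n U E) M) Z Z (({..<K} \<times> {..<L}) \<times> {..<n})"
    unfolding gram_rep_def by simp
  then show "psd (k*d) (ampliate k d (stinespring_map d n U E) M)"
    by (intro gram_rep_psd) (simp_all add: ampliate_def)
qed

lemma completely_positive_cong:
  assumes eq: "\<forall>X\<in>carrier_mat d d. \<Phi> X = \<Psi> X" and cp: "completely_positive d \<Psi>"
  shows "completely_positive d \<Phi>"
proof -
  have "ampliate k d \<Phi> M = ampliate k d \<Psi> M" for k M
    using eq by (simp add: ampliate_def)
  moreover have "linear_on d \<Phi>"
    using cp eq unfolding completely_positive_def linear_on_def by simp
  ultimately show ?thesis using cp unfolding completely_positive_def by simp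
qed

lemma psd_eta_s:
  assumes \<rho>: "psd d \<rho>" and \<eta>: "psd n \<eta>" and U: "U \<in> carrier_mat (d*n) (d*n)"
  shows "psd n (eta_s d n \<eta> U \<rho>)"
proof -
  obtain K :: nat and F where g\<rho>: "gram_rep d \<rho> F F {..<K}" using psd_gram_rep[OF \<rho>] by blast
  obtain L :: nat and G where g\<eta>: "gram_rep n \<eta> G G {..<L}" using psd_gram_rep[OF \<eta>] by blast
  have "\<rho> \<in> carrier_mat d d" "\<eta> \<in> carrier_mat n n" using \<rho> \<eta> unfolding psd_def by auto
  from gram_rep_ptrace_S[OF gram_rep_conj[OF U _ gram_rep_kron[OF this g\<rho> g\<eta>]]] this
  show ?thesis unfolding eta_s_def by (intro gram_rep_psd) (simp_all add: ptrace_S_def)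
qed

lemma ex_density:
  assumes "d > 0"
  shows "\<exists>\<rho>. density d \<rho>"
proof -
  define \<rho> :: "complex mat" where "\<rho> = mat d d (\<lambda>(i,j). if i = 0 \<and> j = 0 then 1 else 0)"
  have "gram_rep d \<rho> (\<lambda>_ i. if i = 0 then 1 else 0) (\<lambda>_ i. if i = 0 then 1 else 0) {()}"
    unfolding gram_rep_def \<rho>_def by auto
  then have "psd d \<rho>" by (intro gram_rep_psd) (simp add: \<rho>_def)
  moreover have "mtrace \<rho> = 1"
    using assms unfolding mtrace_def \<rho>_def by (simp add: sum.delta[of _ 0] lessThan_def)
  ultimately show ?thesis unfolding density_def by blast
qed

theorem mainTheorem1:
  fixes d n :: nat and \<eta> U1 U2 :: "complex mat"
    and Lam_ts G :: "complex mat \<Rightarrow> complex mat"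
  assumes eta: "density n \<eta>"
    and U1: "unitary_mat (d*n) U1" and U2: "unitary_mat (d*n) U2"
    and oCP1: "\<forall>\<rho>. density d \<rho> \<longrightarrow> (\<forall>\<sigma> \<in> carrier_mat d d. Lam_ts_rho d n \<eta> U1 U2 \<rho> \<sigma> = Lam_ts \<sigma>)"
    and oCP2: "\<forall>X \<in> carrier_mat d d. Lam_tr d n \<eta> U1 U2 X = Lam_ts (Lam_sr d n \<eta> U1 X)"
    and inv: "\<forall>X \<in> carrier_mat d d. G X \<in> carrier_mat d d \<and> G (Lam_sr d n \<eta> U1 X) = X \<and> Lam_sr d n \<eta> U1 (G X) = X"
  shows "completely_positive d (\<lambda>X. Lam_tr d n \<eta> U1 U2 (G X))"
proof -
  obtain E where E: "psd n E"
    and \<Phi>: "\<forall>X\<in>carrier_mat d d. Lam_tr d n \<eta> U1 U2 (G X) = stinespring_map d n U2 E X"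
  proof (cases "d = 0")
    case True
    \<comment> \<open>There is no density operator on \<open>\<complex>\<^sup>0\<close>, but all maps on \<open>0 \<times> 0\<close> matrices coincide.\<close>
    then have "Lam_tr d n \<eta> U1 U2 (G X) = stinespring_map d n U2 \<eta> X" for X
      by (intro eq_matI) (simp_all add: Lam_tr_def stinespring_map_def ptrace_E_def)
    then show ?thesis using that eta unfolding density_def by blast
  next
    case False
    then obtain \<rho> where \<rho>: "density d \<rho>" using ex_density by blast
    have "Lam_tr d n \<eta> U1 U2 (G X) = Lam_ts_rho d n \<eta> U1 U2 \<rho> X" if X: "X \<in> carrier_mat d d" for X
    proof -
      have "Lam_tr d n \<eta> U1 U2 (G X) = Lam_ts (Lam_sr d n \<eta> U1 (G X))" using oCP2 inv X by blast
      also have "\<dots> = Lam_ts X" using inv X by simp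
      also have "\<dots> = Lam_ts_rho d n \<eta> U1 U2 \<rho> X" using oCP1 \<rho> X by simp
      finally show ?thesis .
    qed
    moreover have "psd n (eta_s d n \<eta> U1 \<rho>)"
      using psd_eta_s \<rho> eta U1 unfolding density_def unitary_mat_def by blast
    ultimately show ?thesis using that unfolding Lam_ts_rho_def stinespring_map_def by blast
  qed
  have "U2 \<in> carrier_mat (d*n) (d*n)" using U2 unfolding unitary_mat_def by simp
  with E show ?thesis by (intro completely_positive_cong[OF \<Phi>] completely_positive_stinespring_map)
qed

end
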